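(* Define periodic sequences $K_j\in\{0,1\}^{\mathbb N}$ by: $K_1=111\dots$ (repeating block $B_1=1$), and for $j\ge1$, $K_{j+1}$ is the periodic sequence with repeating block $B_{j+1}$ of length $2^{j}$ obtained by writing $B_j$ twice and replacing the last symbol by its complement ($0\leftrightarrow1$). Let $K_\infty=\lim_{j\to\infty}K_j$ (each $B_j$ is a prefix of $B_{j+1}$). For a sequence $s=s_1s_2\dots$ let $\tau(s)=\sum_{k\ge1}t_k2^{-k}$ with $t_k=\sum_{i=1}^k s_i\pmod 2$, and write $\tau_\infty=\tau(K_\infty)=0.t_1t_2t_3\dots$ (binary expansion given by these digits $t_k$). For an integer $p\ge1$ with binary expansion $p=\sum_{i\ge0}n_i2^i$, $n_i\in\{0,1\}$, set $s(p)=\sum_{i\ge0}n_i\pmod 2$. Then $t_k=s(p)$ whenever $k=p\cdot2^\ell$ with $\ell\ge0$ and $p\ge1$ odd.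
   Context: Thus $K_2=\overline{10}$, $K_3=\overline{1011}$, $K_4=\overline{10111010}$, and $K_\infty=1011\,1010\,1011\,1011\dots$; $K_\infty$ is also the fixed point beginning with $1$ of the substitution $1\mapsto10$, $0\mapsto11$. *)

theory Defs
  imports Main
begin

text \<open>Repeating blocks. blk j is the paper's block B_(j+1); symbols are 0/1 naturals.
  B_1 = [1]; B_(j+1) = B_j written twice with the last symbol complemented.\<close>
primrec blk :: "nat \<Rightarrow> nat list" where
  "blk 0 = [1]"
| "blk (Suc j) = blk j @ butlast (blk j) @ [1 - last (blk j)]"

text \<open>The periodic sequence K_(j+1), indexed from 1: K_(j+1)(i) = i-th symbol of the periodic
  repetition of the block.\<close>
definition Kseq :: "nat \<Rightarrow> nat \<Rightarrow> nat" where
  "Kseq j i = blk j ! ((i - 1) mod length (blk j))"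

definition Kinf :: "nat \<Rightarrow> nat" where
  "Kinf i = (THE c. \<forall>\<^sub>F j in sequentially. Kseq j i = c)"

definition tdig :: "nat \<Rightarrow> nat" where
  "tdig k = (\<Sum>i=1..k. Kinf i) mod 2"

fun bitsum :: "nat \<Rightarrow> nat" where
  "bitsum n = (if n = 0 then 0 else n mod 2 + bitsum (n div 2))"

definition sfun :: "nat \<Rightarrow> nat" where
  "sfun p = bitsum p mod 2"

end

theory Submission
  imports Defs
begin

text \<open>Read from position 0, the symbols x of K_infinity satisfy x(2q) = 1 and x(2q+1) = 1 - x(q)
  (the substitution 1 \<mapsto> 10, 0 \<mapsto> 11), because B_(j+1) is B_j followed by B_j with its last symbol
  flipped. Hence the partial sums S(k) = x(0) + ... + x(k-1) satisfy S(2m) + S(m) = 2m and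
  S(2m+1) = S(2m) + 1, so modulo 2 they obey the recursion s(2m) = s(m), s(2m+1) = s(m) + 1 of the
  binary digit sum. Thus t_k = s(k) for every k, and s(p 2^l) = s(p).\<close>

text \<open>kfix n is the symbol of K_infinity at position n + 1 (lemma Kinf_Suc).\<close>

function kfix :: "nat \<Rightarrow> nat" where
  "kfix n = (if even n then 1 else 1 - kfix (n div 2))"
  by auto
termination
  by (relation "measure id") (auto elim: oddE)

declare kfix.simps [simp del]

lemma kfix_even [simp]: "kfix (2 * q) = 1"
  by (subst kfix.simps) simp

lemma kfix_odd [simp]: "kfix (Suc (2 * q)) = 1 - kfix q"
  by (subst kfix.simps) simp

lemma kfix_le_1: "kfix n \<le> 1"
  by (subst kfix.simps) simp

lemma length_blk [simp]: "length (blk j) = 2 ^ j"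
  by (induction j) auto

lemma blk_not_Nil [simp]: "blk j \<noteq> []"
  by (simp flip: length_0_conv)

lemma kfix_add_pow2: "m + 1 < 2 ^ j \<Longrightarrow> kfix (2 ^ j + m) = kfix m"
proof (induction j arbitrary: m)
  case 0
  then show ?case by simp
next
  case (Suc j)
  show ?case
  proof (cases "even m")
    case True
    then obtain q where "m = 2 * q" by (rule evenE)
    then have "2 ^ Suc j + m = 2 * (2 ^ j + q)" by simp
    with \<open>m = 2 * q\<close> show ?thesis by (simp only: kfix_even)
  next
    case False
    then obtain q where m: "m = Suc (2 * q)" by (auto elim!: oddE)
    have "2 ^ Suc j + m = Suc (2 * (2 ^ j + q))" using m by simp
    then have "kfix (2 ^ Suc j + m) = 1 - kfix (2 ^ j + q)" by (simp only: kfix_odd)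
    also have "kfix (2 ^ j + q) = kfix q"
      using Suc.prems m by (intro Suc.IH) simp
    finally show ?thesis using m by simp
  qed
qed

lemma kfix_pow2_pred: "kfix (2 ^ j + (2 ^ j - 1)) = 1 - kfix (2 ^ j - 1)"
proof -
  have "2 ^ j + (2 ^ j - 1) = Suc (2 * (2 ^ j - 1 :: nat))"
    using one_le_power[of "2::nat" j] by linarith
  then show ?thesis by simp
qed

lemma nth_blk_Suc_upper:
  assumes "m < 2 ^ j"
  shows "blk (Suc j) ! (2 ^ j + m) = (if m = 2 ^ j - 1 then 1 - blk j ! m else blk j ! m)"
  using assms by (auto simp: nth_append nth_butlast last_conv_nth)

lemma nth_blk: "n < 2 ^ j \<Longrightarrow> blk j ! n = kfix n"
proof (induction j arbitrary: n)
  case 0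
  then show ?case using kfix_even[of 0] by simp
next
  case (Suc j)
  show ?case
  proof (cases "n < 2 ^ j")
    case True
    then show ?thesis using Suc.IH by (simp add: nth_append)
  next
    case False
    define m where "m = n - 2 ^ j"
    have n: "n = 2 ^ j + m" and m: "m < 2 ^ j"
      using False Suc.prems by (simp_all add: m_def)
    show ?thesis
    proof (cases "m = 2 ^ j - 1")
      case True
      have "blk (Suc j) ! n = 1 - blk j ! m"
        unfolding n by (subst nth_blk_Suc_upper[OF m]) (simp add: True)
      also have "\<dots> = 1 - kfix m" by (simp only: Suc.IH[OF m])
      also have "\<dots> = kfix n"
        unfolding n True by (rule kfix_pow2_pred [symmetric])
      finally show ?thesis .
    next
      case False
      have "blk (Suc j) ! n = blk j ! m"
        unfolding n by (subst nth_blk_Suc_upper[OF m]) (simp only: False if_False)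
      also have "\<dots> = kfix m" by (rule Suc.IH[OF m])
      also have "\<dots> = kfix n"
        unfolding n using m False by (intro kfix_add_pow2[symmetric]) linarith
      finally show ?thesis .
    qed
  qed
qed

lemma The_eventually_eq_sequentially:
  assumes "\<forall>\<^sub>F j in sequentially. f j = c"
  shows "(THE c. \<forall>\<^sub>F j in sequentially. f j = c) = c"
proof (rule the_equality)
  fix d
  assume "\<forall>\<^sub>F j in sequentially. f j = d"
  with assms have "\<forall>\<^sub>F j in sequentially. f j = c \<and> f j = d"
    by (rule eventually_conj)
  then show "d = c"
    by (auto dest: eventually_happens'[OF trivial_limit_sequentially])
qed (fact assms)

lemma Kinf_Suc: "Kinf (Suc i) = kfix i"
  unfolding Kinf_def
proof (intro The_eventually_eq_sequentially eventually_sequentiallyI)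
  fix j
  assume "i \<le> j"
  then have "2 ^ i \<le> (2::nat) ^ j" by simp
  then have "i < 2 ^ j" using less_exp[of i] by linarith
  then show "Kseq j (Suc i) = kfix i" by (simp add: Kseq_def nth_blk)
qed

definition ksum :: "nat \<Rightarrow> nat" where
  "ksum k = (\<Sum>i<k. kfix i)"

lemma tdig_eq_ksum: "tdig k = ksum k mod 2"
  by (simp add: tdig_def ksum_def sum.atLeast1_atMost_eq Kinf_Suc)

lemma ksum_double: "ksum (2 * m) + ksum m = 2 * m"
proof (induction m)
  case 0
  then show ?case by (simp add: ksum_def)
next
  case (Suc m)
  have "ksum (2 * Suc m) = ksum (2 * m) + 1 + (1 - kfix m)"
    by (simp add: ksum_def)
  moreover have "ksum (Suc m) = ksum m + kfix m"
    by (simp add: ksum_def)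
  ultimately show ?case using Suc.IH kfix_le_1[of m] by simp
qed

lemma ksum_double_mod_2: "ksum (2 * m) mod 2 = ksum m mod 2"
  using ksum_double[of m] by presburger

lemma ksum_Suc_double: "ksum (Suc (2 * m)) = Suc (ksum (2 * m))"
  by (simp add: ksum_def)

lemma bitsum_double: "bitsum (2 * n) = bitsum n"
  by (subst bitsum.simps) simp

lemma bitsum_Suc_double: "bitsum (Suc (2 * n)) = Suc (bitsum n)"
  by (subst bitsum.simps) simp

declare bitsum.simps [simp del]

lemma tdig_eq_sfun: "tdig k = sfun k"
  unfolding tdig_eq_ksum sfun_def
proof (induction k rule: nat_bit_induct)
  case zero
  then show ?case by (simp add: ksum_def bitsum.simps)
next
  case (even n)
  then show ?case by (simp add: ksum_double_mod_2 bitsum_double)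
next
  case (odd n)
  then show ?case
    using ksum_double_mod_2[of n] by (simp add: ksum_Suc_double bitsum_Suc_double) presburger
qed

lemma bitsum_mult_pow2: "bitsum (p * 2 ^ l) = bitsum p"
proof (induction l)
  case 0
  then show ?case by simp
next
  case (Suc l)
  have "p * 2 ^ Suc l = 2 * (p * 2 ^ l)" by simp
  with Suc.IH show ?case by (simp only: bitsum_double)
qed

theorem proposition3:
  fixes p l k :: nat
  assumes "p \<ge> 1" and "odd p" and "k = p * 2 ^ l"
  shows "tdig k = sfun p"
  using assms(3) by (simp add: tdig_eq_sfun sfun_def bitsum_mult_pow2)

end
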